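(* Let $\mathcal{M}=(C,\mathcal{A})$ be a circular-arc model, where $C$ is a circle and $\mathcal{A}=\{A_1=(s_1,t_1),\dots,A_n=(s_n,t_n)\}$ is a family of open arcs of $C$ (arc $(s_i,t_i)$ runs clockwise from $s_i$ to $t_i$), and let $G$ be its intersection graph with vertex $v_i$ corresponding to $A_i$. Assume that no set of at most three arcs of $\mathcal{A}$ has union equal to $C$. Let $p\in C$ be a point with $\max_{q\in C}|\mathcal{A}(q)| = |\mathcal{A}(p)| = 3$, and index the arcs so that $\mathcal{A}(p)=\{A_1,A_2,A_3\}$. Choose $\epsilon>0$ so small that no endpoint of any arc lies in $[p-\epsilon,p+\epsilon]$, and form the interval model obtained by replacing each $A_i$, $i\in\{1,2,3\}$, by the two arcs $(s_i,p-\epsilon)$ and $(p+\epsilon,t_i)$ (all other arcs unchanged). Let $G_p$ be its intersection graph, where $u_i$ ($1\le i\le 3$) corresponds to $(s_i,p-\epsilon)$, $u_{n+i}$ ($1\le i\le 3$) corresponds to $(p+\epsilon,t_i)$, and $u_k$ ($4\le k\le n$) corresponds to $A_k$. Then $\{u_1,u_2,u_3\}$ and $\{u_{n+1},u_{n+2},u_{n+3}\}$ are triangles of $G_p$ that have no common vertex and no edge of $G_p$ joins a vertex of one to a vertex of the other.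
   Context: For a point $q\in C$, $\mathcal{A}(q)$ denotes the set of arcs of $\mathcal{A}$ containing $q$. *)

theory Defs
  imports Complex_Main
begin

text \<open>The circle C is modelled as the reals modulo 1 (R/Z); a real number x denotes the
point frac x. The circle is traversed "clockwise" in the direction of increasing reals.
The open arc (s,t) consists of the points reached strictly after s and strictly before t
when moving from s in this direction.\<close>

definition on_arc :: "real \<Rightarrow> real \<Rightarrow> real \<Rightarrow> bool" where
  "on_arc s t x \<longleftrightarrow> 0 < frac (x - s) \<and> frac (x - s) < frac (t - s)"

definition arc_adj :: "(nat \<Rightarrow> real) \<Rightarrow> (nat \<Rightarrow> real) \<Rightarrow> nat \<Rightarrow> nat \<Rightarrow> bool" where
  "arc_adj s t k l \<longleftrightarrow> k \<noteq> l \<and> (\<exists>x. on_arc (s k) (t k) x \<and> on_arc (s l) (t l) x)"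

definition arcs_at :: "nat \<Rightarrow> (nat \<Rightarrow> real) \<Rightarrow> (nat \<Rightarrow> real) \<Rightarrow> real \<Rightarrow> nat set" where
  "arcs_at n s t q = {i \<in> {1..n}. on_arc (s i) (t i) q}"

definition cut_s :: "nat \<Rightarrow> (nat \<Rightarrow> real) \<Rightarrow> real \<Rightarrow> real \<Rightarrow> nat \<Rightarrow> real" where
  "cut_s n s p \<epsilon> k = (if k \<in> {n+1, n+2, n+3} then p + \<epsilon> else s k)"

definition cut_t :: "nat \<Rightarrow> (nat \<Rightarrow> real) \<Rightarrow> real \<Rightarrow> real \<Rightarrow> nat \<Rightarrow> real" where
  "cut_t n t p \<epsilon> k = (if k \<in> {1, 2, 3} then p - \<epsilon>
                        else if k \<in> {n+1, n+2, n+3} then t (k - n) else t k)"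

end

theory Submission
  imports Defs
begin

text \<open>Lift the three arcs through p to real intervals (p - a_i, p + b_i) with
a_i, b_i > \<epsilon> and a_i + b_i < 1. The pieces (s_i, p - \<epsilon>) then all contain points just
below p - \<epsilon>, and the pieces (p + \<epsilon>, t_i) points just above p + \<epsilon>, which gives the
two triangles. The piece (s_k, p - \<epsilon>) can only meet (p + \<epsilon>, t_j) if a_k + b_j > 1, and
then A_k and A_j together cover the circle, contradicting the hypothesis that no three
arcs do.\<close>

lemma on_arc_frac_cong:
  assumes "frac s = frac s'" "frac t = frac t'"
  shows "on_arc s t = on_arc s' t'"
  using assms unfolding on_arc_def fun_eq_iff by (metis frac_diff)

lemma on_arc_iff_lift:
  fixes s t x :: real
  assumes "s < t" "t < s + 1"
  shows "on_arc s t x \<longleftrightarrow> (\<exists>m::int. s < x + m \<and> x + m < t)"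
proof
  assume "on_arc s t x"
  then have "0 < frac (x - s)" "frac (x - s) < t - s"
    using assms by (simp_all add: on_arc_def frac_eq del: frac_gt_0_iff)
  then show "\<exists>m::int. s < x + m \<and> x + m < t"
    by (intro exI[of _ "- \<lfloor>x - s\<rfloor>"]) (simp add: frac_def)
next
  assume "\<exists>m::int. s < x + m \<and> x + m < t"
  then obtain m :: int where m: "s < x + m" "x + m < t" by blast
  have "frac (x - s) = frac (x + m - s)"
    by (metis add.commute add_diff_eq frac_add_of_int_right)
  also have "\<dots> = x + m - s" using m assms by (simp add: frac_eq)
  finally show "on_arc s t x" using m assms unfolding on_arc_def by (simp add: frac_eq)
qed

lemma on_arc_through_point:
  assumes "on_arc s t p"
  shows "0 < frac (p - s)" "0 < frac (t - p)" "frac (p - s) + frac (t - p) < 1"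
    and "on_arc s t = on_arc (p - frac (p - s)) (p + frac (t - p))"
proof -
  have "frac (t - p) = frac ((t - s) - (p - s))" by simp
  also have "\<dots> = frac (t - s) - frac (p - s)"
    using assms unfolding on_arc_def by (intro frac_diff_pos) simp
  finally have "frac (t - p) = frac (t - s) - frac (p - s)" .
  then show "0 < frac (p - s)" "0 < frac (t - p)" "frac (p - s) + frac (t - p) < 1"
    using assms frac_lt_1[of "t - s"] unfolding on_arc_def by auto
  show "on_arc s t = on_arc (p - frac (p - s)) (p + frac (t - p))"
    by (rule on_arc_frac_cong) (simp_all add: frac_diff_simp)
qed

lemma on_arc_through_point_margin:
  assumes "on_arc s t p"
    and clear: "\<forall>x. p - \<epsilon> \<le> x \<and> x \<le> p + \<epsilon> \<longrightarrow> frac x \<noteq> frac s \<and> frac x \<noteq> frac t"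
  shows "\<epsilon> < frac (p - s)" "\<epsilon> < frac (t - p)"
proof -
  have "frac (p - frac (p - s)) = frac s" "frac (p + frac (t - p)) = frac t"
    by (simp_all add: frac_diff_simp)
  then show "\<epsilon> < frac (p - s)" "\<epsilon> < frac (t - p)"
    using clear on_arc_through_point(1,2)[OF assms(1)] by (smt (verit))+
qed

lemma on_arc_disjoint:
  fixes s1 t1 s2 t2 :: real
  assumes "s1 < t1" "t1 \<le> s2" "s2 < t2" "t2 \<le> s1 + 1"
  shows "\<not> (on_arc s1 t1 x \<and> on_arc s2 t2 x)"
proof
  assume "on_arc s1 t1 x \<and> on_arc s2 t2 x"
  then obtain m m' :: int where "s1 < x + m" "x + m < t1" "s2 < x + m'" "x + m' < t2"
    using assms by (auto simp: on_arc_iff_lift)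
  then have "real_of_int m < of_int m'" "real_of_int m' < of_int (m + 1)"
    using assms by auto
  then show False unfolding of_int_less_iff by linarith
qed

lemma on_arc_cover:
  fixes s1 t1 s2 t2 c :: real
  assumes "s1 < c" "c < t1" "t1 < s1 + 1" "s2 < c" "c < t2" "t2 < s2 + 1" "s1 + 1 < t2"
  shows "on_arc s1 t1 x \<or> on_arc s2 t2 x"
proof -
  define m where "m = - \<lfloor>x - c\<rfloor>"
  have "c \<le> x + m" "x + m < c + 1"
    unfolding m_def by linarith+
  show ?thesis
  proof (cases "x + m < t2")
    case True
    then have "on_arc s2 t2 x"
      using assms \<open>c \<le> x + m\<close> by (auto simp: on_arc_iff_lift intro!: exI[of _ m])
    then show ?thesis ..
  next
    case False
    then have "s1 < x + of_int (m - 1)" "x + of_int (m - 1) < t1"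
      using assms \<open>x + m < c + 1\<close> by auto
    moreover have "s1 < t1" using assms by simp
    ultimately have "on_arc s1 t1 x"
      using assms on_arc_iff_lift[of s1 t1 x] by blast
    then show ?thesis ..
  qed
qed

lemma finite_exists_between:
  fixes l :: "'a \<Rightarrow> real"
  assumes "finite K" "\<forall>k\<in>K. l k < r"
  shows "\<exists>x<r. \<forall>k\<in>K. l k < x"
proof -
  define m where "m = Max (insert (r - 1) (l ` K))"
  have "m < r" "\<forall>k\<in>K. l k \<le> m"
    using assms unfolding m_def by auto
  then show ?thesis by (intro exI[of _ "(m + r) / 2"]) auto
qed

lemma on_arcs_common_end_point:
  fixes l :: "'a \<Rightarrow> real"
  assumes "finite K" "\<forall>k\<in>K. l k < r \<and> r < l k + 1"
  shows "\<exists>x. \<forall>k\<in>K. on_arc (l k) r x"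
proof -
  obtain x where "x < r" "\<forall>k\<in>K. l k < x"
    using finite_exists_between[of K l r] assms by auto
  then show ?thesis
    using assms by (intro exI[of _ x]) (auto simp: on_arc_iff_lift intro!: exI[of _ 0])
qed

lemma on_arcs_common_start_point:
  fixes r :: "'a \<Rightarrow> real"
  assumes "finite K" "\<forall>k\<in>K. l < r k \<and> r k < l + 1"
  shows "\<exists>x. \<forall>k\<in>K. on_arc l (r k) x"
proof -
  obtain y where "y < - l" "\<forall>k\<in>K. - r k < y"
    using finite_exists_between[of K "\<lambda>k. - r k" "- l"] assms by auto
  then show ?thesis
    using assms by (intro exI[of _ "- y"]) (auto simp: on_arc_iff_lift intro!: exI[of _ 0])
qed

lemma cut_pieces_meet_imp_cover:
  fixes a b a' b' p \<epsilon> :: real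
  assumes "0 < \<epsilon>" "\<epsilon> < a" "0 < b" "a + b < 1" "0 < a'" "\<epsilon> < b'" "a' + b' < 1"
    and "on_arc (p - a) (p - \<epsilon>) x" "on_arc (p + \<epsilon>) (p + b') x"
  shows "on_arc (p - a) (p + b) y \<or> on_arc (p - a') (p + b') y"
proof -
  have "1 < a + b'"
    using on_arc_disjoint[of "p - a" "p - \<epsilon>" "p + \<epsilon>" "p + b'" x] assms by force
  then show ?thesis
    using assms by (intro on_arc_cover[where c = p]) auto
qed

lemma arc_adj_if_common_point:
  assumes "\<forall>k\<in>K. on_arc (s k) (t k) x" "k \<in> K" "l \<in> K" "k \<noteq> l"
  shows "arc_adj s t k l"
  using assms unfolding arc_adj_def by blast

theorem lemma3:
  fixes n :: nat and s t :: "nat \<Rightarrow> real" and p \<epsilon> :: real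
  assumes n3: "n \<ge> 3"
    and nondeg: "\<forall>i\<in>{1..n}. frac (s i) \<noteq> frac (t i)"
    and no_cover: "\<forall>I. I \<subseteq> {1..n} \<and> card I \<le> 3 \<longrightarrow>
                     \<not> (\<forall>x. \<exists>i\<in>I. on_arc (s i) (t i) x)"
    and max3: "\<forall>q. card (arcs_at n s t q) \<le> 3"
    and at_p: "arcs_at n s t p = {1, 2, 3}"
    and eps: "\<epsilon> > 0"
    and eps_small: "\<forall>i\<in>{1..n}. \<forall>x. p - \<epsilon> \<le> x \<and> x \<le> p + \<epsilon> \<longrightarrow>
                       frac x \<noteq> frac (s i) \<and> frac x \<noteq> frac (t i)"
  shows "(\<forall>k\<in>{1,2,3}. \<forall>l\<in>{1,2,3}. k \<noteq> l \<longrightarrow>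
            arc_adj (cut_s n s p \<epsilon>) (cut_t n t p \<epsilon>) k l)
       \<and> (\<forall>k\<in>{n+1,n+2,n+3}. \<forall>l\<in>{n+1,n+2,n+3}. k \<noteq> l \<longrightarrow>
            arc_adj (cut_s n s p \<epsilon>) (cut_t n t p \<epsilon>) k l)
       \<and> {1,2,3} \<inter> {n+1,n+2,n+3} = ({} :: nat set)
       \<and> (\<forall>k\<in>{1,2,3}. \<forall>l\<in>{n+1,n+2,n+3}.
            \<not> arc_adj (cut_s n s p \<epsilon>) (cut_t n t p \<epsilon>) k l)"
proof -
  define a where "a i = frac (p - s i)" for i
  define b where "b i = frac (t i - p)" for i
  have in_range: "{1, 2, 3} \<subseteq> {1..n}" using n3 by auto
  have margins: "\<epsilon> < a i \<and> \<epsilon> < b i \<and> a i + b i < 1"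
    and whole: "on_arc (s i) (t i) = on_arc (p - a i) (p + b i)" if i: "i \<in> {1, 2, 3}" for i
  proof -
    have through: "on_arc (s i) (t i) p" using at_p i unfolding arcs_at_def by blast
    have "\<forall>x. p - \<epsilon> \<le> x \<and> x \<le> p + \<epsilon> \<longrightarrow> frac x \<noteq> frac (s i) \<and> frac x \<noteq> frac (t i)"
      using eps_small in_range i by blast
    then show "\<epsilon> < a i \<and> \<epsilon> < b i \<and> a i + b i < 1" "on_arc (s i) (t i) = on_arc (p - a i) (p + b i)"
      using on_arc_through_point(3,4)[OF through] on_arc_through_point_margin[OF through]
      unfolding a_def b_def by auto
  qed
  have left: "on_arc (cut_s n s p \<epsilon> k) (cut_t n t p \<epsilon> k) = on_arc (p - a k) (p - \<epsilon>)"
    if "k \<in> {1, 2, 3}" for k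
    using n3 that unfolding cut_s_def cut_t_def a_def
    by (intro on_arc_frac_cong) (auto simp: frac_diff_simp)
  have right: "on_arc (cut_s n s p \<epsilon> k) (cut_t n t p \<epsilon> k) = on_arc (p + \<epsilon>) (p + b (k - n))"
    if "k \<in> {n + 1, n + 2, n + 3}" for k
    using n3 that unfolding cut_s_def cut_t_def b_def
    by (intro on_arc_frac_cong) auto
  have left_bounds: "\<forall>k\<in>{1, 2, 3}. p - a k < p - \<epsilon> \<and> p - \<epsilon> < p - a k + 1"
    using margins[of 1] margins[of 2] margins[of 3] eps by simp
  obtain x where "\<forall>k\<in>{1, 2, 3}. on_arc (p - a k) (p - \<epsilon>) x"
    using on_arcs_common_end_point[OF _ left_bounds] by auto
  then have left_triangle: "\<forall>k\<in>{1, 2, 3}. on_arc (cut_s n s p \<epsilon> k) (cut_t n t p \<epsilon> k) x"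
    by (simp add: left)
  have right_bounds: "\<forall>j\<in>{1, 2, 3}. p + \<epsilon> < p + b j \<and> p + b j < p + \<epsilon> + 1"
    using margins[of 1] margins[of 2] margins[of 3] eps by simp
  obtain y where y: "\<forall>j\<in>{1, 2, 3}. on_arc (p + \<epsilon>) (p + b j) y"
    using on_arcs_common_start_point[OF _ right_bounds] by auto
  have right_triangle: "\<forall>k\<in>{n + 1, n + 2, n + 3}. on_arc (cut_s n s p \<epsilon> k) (cut_t n t p \<epsilon> k) y"
  proof
    fix k assume k: "k \<in> {n + 1, n + 2, n + 3}"
    then have "k - n \<in> {1, 2, 3}" by auto
    with y have "on_arc (p + \<epsilon>) (p + b (k - n)) y" by blast
    then show "on_arc (cut_s n s p \<epsilon> k) (cut_t n t p \<epsilon> k) y"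
      using right[OF k] by simp
  qed
  have no_cross_edge: "\<not> arc_adj (cut_s n s p \<epsilon>) (cut_t n t p \<epsilon>) k l"
    if k: "k \<in> {1, 2, 3}" and l: "l \<in> {n + 1, n + 2, n + 3}" for k l
  proof
    define j where "j = l - n"
    have j: "j \<in> {1, 2, 3}" using l unfolding j_def by auto
    assume "arc_adj (cut_s n s p \<epsilon>) (cut_t n t p \<epsilon>) k l"
    then obtain x where x: "on_arc (p - a k) (p - \<epsilon>) x" "on_arc (p + \<epsilon>) (p + b j) x"
      unfolding arc_adj_def left[OF k] right[OF l] j_def by blast
    have "on_arc (s k) (t k) y \<or> on_arc (s j) (t j) y" for y
      unfolding whole[OF k] whole[OF j]
      by (rule cut_pieces_meet_imp_cover[OF _ _ _ _ _ _ _ x])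
        (use margins[OF k] margins[OF j] eps in auto)
    then have "\<forall>y. \<exists>i\<in>{k, j}. on_arc (s i) (t i) y" by blast
    moreover have "{k, j} \<subseteq> {1..n}" "card {k, j} \<le> 3"
      using k j in_range by (auto simp: card_insert_if)
    ultimately show False using no_cover by blast
  qed
  have "{1, 2, 3} \<inter> {n + 1, n + 2, n + 3} = ({} :: nat set)" using n3 by auto
  then show ?thesis
    using arc_adj_if_common_point[OF left_triangle] arc_adj_if_common_point[OF right_triangle]
      no_cross_edge by (intro conjI ballI impI) simp_all
qed

end
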